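(* Let $m,d_o,N_D\ge1$ be integers, $d=md_o$, and let $(x^j,y^j)_{j=1}^{N_D}$ be data with $x^j\in\mathbb R^{d_o}$ and $y^j\in\{1,\dots,m\}$. For $q=(q^1,\dots,q^m)\in\mathbb R^d$ with $q^i\in\mathbb R^{d_o}$ let \[p(y^j\mid q)=\frac{\exp(\langle x^j,q^{y^j}\rangle)}{\sum_{k=1}^m\exp(\langle x^j,q^k\rangle)},\qquad U(q)=\frac{\|q\|^2}{2\sigma_0^2}+\mathrm{const}-\sum_{j=1}^{N_D}\log p(y^j\mid q),\] with $\sigma_0>0$. Then \[\sup_{q\in\mathbb R^d}\|\nabla^2U(q)\|\le\sigma_0^{-2}+\Big\|\sum_{l=1}^{N_D}x^l(x^l)^T\Big\|,\qquad \sup_{q\in\mathbb R^d}\|\nabla^3U(q)\|_{\{1,2\}\{3\}}\le6\,\Big\|\sum_{l=1}^{N_D}x^l(x^l)^T\Big(\sum_{k=1}^{N_D}\langle x^l,x^k\rangle^2\Big)\Big\|^{1/2}.\]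
   Context: $\|\cdot\|$ of a matrix is the spectral (operator) norm. For $A\in\mathbb R^{d\times d\times d}$, $\|A\|_{\{1,2\}\{3\}}=\sup\{\sum_{i,j,k}A_{ijk}x_{ij}y_k:\sum_{i,j}x_{ij}^2\le1,\sum_ky_k^2\le1\}$, and $(\nabla^3U)_{ijk}=\partial_i\partial_j\partial_kU$. The constant in $U$ (the log-normalization of the Gaussian prior) does not depend on $q$. *)

theory Defs
  imports "HOL-Analysis.Analysis"
begin

text \<open>Parameters q in R^d, d = m * d_o, are represented as q :: real^'o^'m,
  with block q $ k = q^k in R^{d_o}. Coordinates of R^d are indexed by pairs (k, a).\<close>

definition coord :: "('m::finite \<times> 'o::finite) \<Rightarrow> real^'o^'m" where
  "coord i = axis (fst i) (axis (snd i) 1)"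

definition pdiff :: "('m::finite \<times> 'o::finite) \<Rightarrow> (real^'o^'m \<Rightarrow> real) \<Rightarrow> real^'o^'m \<Rightarrow> real" where
  "pdiff i f q = deriv (\<lambda>t. f (q + t *\<^sub>R coord i)) 0"

definition spec_norm :: "('i::finite \<Rightarrow> 'i \<Rightarrow> real) \<Rightarrow> real" where
  "spec_norm M = Sup {(\<Sum>i\<in>UNIV. \<Sum>j\<in>UNIV. x i * M i j * y j) | x y.
      (\<Sum>i\<in>UNIV. (x i)\<^sup>2) \<le> 1 \<and> (\<Sum>j\<in>UNIV. (y j)\<^sup>2) \<le> 1}"

definition tensor_norm_12_3 :: "('i::finite \<Rightarrow> 'i \<Rightarrow> 'i \<Rightarrow> real) \<Rightarrow> real" where
  "tensor_norm_12_3 A = Sup {(\<Sum>i\<in>UNIV. \<Sum>j\<in>UNIV. \<Sum>k\<in>UNIV. A i j k * x i j * y k) | x y.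
      (\<Sum>i\<in>UNIV. \<Sum>j\<in>UNIV. (x i j)\<^sup>2) \<le> 1 \<and> (\<Sum>k\<in>UNIV. (y k)\<^sup>2) \<le> 1}"

definition lik :: "(nat \<Rightarrow> real^'o) \<Rightarrow> (nat \<Rightarrow> 'm::finite) \<Rightarrow> nat \<Rightarrow> real^'o::finite^'m \<Rightarrow> real" where
  "lik x y j q = exp (x j \<bullet> (q $ y j)) / (\<Sum>k\<in>UNIV. exp (x j \<bullet> (q $ k)))"

definition potU :: "real \<Rightarrow> real \<Rightarrow> nat \<Rightarrow> (nat \<Rightarrow> real^'o) \<Rightarrow> (nat \<Rightarrow> 'm::finite)
    \<Rightarrow> real^'o::finite^'m \<Rightarrow> real" where
  "potU \<sigma>0 c N x y q = (norm q)\<^sup>2 / (2 * \<sigma>0\<^sup>2) + c - (\<Sum>j=1..N. ln (lik x y j q))"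

end

theory Submission
  imports Defs
begin

text \<open>
Moving q along a direction e shifts the logits of data point l affinely, with slope
w_l(e)_k = <x_l, e^k>. Differentiating log-sum-exp therefore gives
D^2 U(q)[e, e'] = <e, e'> / sigma0^2 + sum_l Cov_l(w_l(e), w_l(e')) and
D^3 U(q)[e, e', e''] = sum_l kappa_l(w_l(e), w_l(e'), w_l(e'')), where Cov_l and the joint
third cumulant kappa_l are taken under the softmax distribution p_l(q) on the m classes.
A covariance is at most the mean of the two second moments, and
sum_l sum_k <x_l, e^k>^2 <= ||sum_l x_l x_l^T|| ||e||^2, which gives the Hessian bound.
For a fixed direction e, the matrix D^3 U(q)[e] has entries
sum_l x_l(a) x_l(b) kappa_l(w_l(e), delta_k, delta_k'). By AM-GM on the Gram entries its squared
Frobenius norm is at most sum_l s_l sum_{k,k'} kappa_l(w_l(e), delta_k, delta_k')^2 with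
s_l = sum_j <x_l, x_j>^2, and the cumulant matrix of a probability vector satisfies
sum_{k,k'} kappa(f, delta_k, delta_k')^2 <= 10 sum_k f_k^2. So the squared Frobenius norm is at most
10 lambda ||e||^2 with lambda the spectral norm on the right of the third bound, and
Cauchy-Schwarz over the pair index (i, j) gives that bound, since sqrt 10 <= 6.
\<close>

section \<open>Moments under a probability vector\<close>

definition expect :: "('k::finite \<Rightarrow> real) \<Rightarrow> ('k \<Rightarrow> real) \<Rightarrow> real" where
  "expect p f = (\<Sum>k\<in>UNIV. p k * f k)"

definition cov :: "('k::finite \<Rightarrow> real) \<Rightarrow> ('k \<Rightarrow> real) \<Rightarrow> ('k \<Rightarrow> real) \<Rightarrow> real" where
  "cov p f g = expect p (\<lambda>k. f k * g k) - expect p f * expect p g"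

definition cum3 :: "('k::finite \<Rightarrow> real) \<Rightarrow> ('k \<Rightarrow> real) \<Rightarrow> ('k \<Rightarrow> real) \<Rightarrow> ('k \<Rightarrow> real) \<Rightarrow> real" where
  "cum3 p f g h = expect p (\<lambda>k. f k * g k * h k)
     - expect p (\<lambda>k. f k * g k) * expect p h - expect p (\<lambda>k. f k * h k) * expect p g
     - expect p f * expect p (\<lambda>k. g k * h k) + 2 * expect p f * expect p g * expect p h"

lemma expect_add: "expect p (\<lambda>k. f k + g k) = expect p f + expect p g"
  by (simp add: expect_def distrib_left sum.distrib)

lemma expect_scale: "expect p (\<lambda>k. c * f k) = c * expect p f"
  by (simp add: expect_def sum_distrib_left mult.left_commute)

lemma expect_diff: "expect p (\<lambda>k. f k - g k) = expect p f - expect p g"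
  by (simp add: expect_def right_diff_distrib sum_subtractf)

lemma expect_const:
  assumes "sum p UNIV = 1"
  shows "expect p (\<lambda>_. c) = c"
  using assms by (simp add: expect_def sum_distrib_right[symmetric])

lemma expect_nonneg:
  assumes "\<And>k. 0 \<le> p k" "\<And>k. 0 \<le> f k"
  shows "0 \<le> expect p f"
  unfolding expect_def using assms by (simp add: sum_nonneg)

lemma prob_le_one:
  fixes p :: "'k::finite \<Rightarrow> real"
  assumes "\<And>k. 0 \<le> p k" "sum p UNIV = 1"
  shows "p k \<le> 1"
  using member_le_sum[of k UNIV p] assms by simp

lemma expect_square_le_sum_squares:
  assumes "\<And>k. 0 \<le> p k" "sum p UNIV = 1"
  shows "expect p (\<lambda>k. (f k)\<^sup>2) \<le> (\<Sum>k\<in>UNIV. (f k)\<^sup>2)"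
  unfolding expect_def
  by (rule sum_mono) (simp add: assms mult_left_le_one_le prob_le_one)

lemma variance_eq:
  assumes "sum p UNIV = 1"
  shows "expect p (\<lambda>k. (f k - expect p f)\<^sup>2) = expect p (\<lambda>k. (f k)\<^sup>2) - (expect p f)\<^sup>2"
proof -
  define m where "m = expect p f"
  have "(\<lambda>k. (f k - m)\<^sup>2) = (\<lambda>k. ((f k)\<^sup>2 - (2 * m) * f k) + m\<^sup>2)"
    by (simp add: fun_eq_iff power2_diff)
  then have "expect p (\<lambda>k. (f k - m)\<^sup>2) = expect p (\<lambda>k. (f k)\<^sup>2) - 2 * m * m + m\<^sup>2"
    using assms by (simp only: expect_add expect_diff expect_scale expect_const m_def)
  then show ?thesis
    by (simp add: m_def power2_eq_square)
qed

lemma square_expect_le: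
  assumes "\<And>k. 0 \<le> p k" "sum p UNIV = 1"
  shows "(expect p f)\<^sup>2 \<le> expect p (\<lambda>k. (f k)\<^sup>2)"
  using expect_nonneg[of p "\<lambda>k. (f k - expect p f)\<^sup>2"] variance_eq[of p f] assms by simp

lemma cov_le_sum_squares:
  assumes "\<And>k. 0 \<le> p k" "sum p UNIV = 1"
  shows "2 * cov p f g \<le> (\<Sum>k\<in>UNIV. (f k)\<^sup>2) + (\<Sum>k\<in>UNIV. (g k)\<^sup>2)"
proof -
  have "(\<lambda>k. (f k - g k)\<^sup>2) = (\<lambda>k. ((f k)\<^sup>2 + (g k)\<^sup>2) - 2 * (f k * g k))"
    by (simp add: fun_eq_iff power2_diff)
  moreover have "(expect p (\<lambda>k. f k - g k))\<^sup>2 \<le> expect p (\<lambda>k. (f k - g k)\<^sup>2)"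
    using assms by (rule square_expect_le)
  ultimately have "(expect p f - expect p g)\<^sup>2
      \<le> expect p (\<lambda>k. (f k)\<^sup>2) + expect p (\<lambda>k. (g k)\<^sup>2) - 2 * expect p (\<lambda>k. f k * g k)"
    by (simp add: expect_diff expect_add expect_scale)
  then have "2 * cov p f g \<le> expect p (\<lambda>k. (f k)\<^sup>2) + expect p (\<lambda>k. (g k)\<^sup>2)"
    unfolding cov_def power2_diff mult.assoc right_diff_distrib
    using zero_le_power2[of "expect p f"] zero_le_power2[of "expect p g"] by linarith
  then show ?thesis
    using expect_square_le_sum_squares[OF assms, of f] expect_square_le_sum_squares[OF assms, of g]
    by linarith
qed

lemma cov_commute: "cov p f g = cov p g f"
  by (simp add: cov_def mult.commute)

lemma cov_add_left: "cov p (\<lambda>k. f k + g k) h = cov p f h + cov p g h"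
  by (simp add: cov_def expect_def algebra_simps sum.distrib)

lemma cov_scale_left: "cov p (\<lambda>k. c * f k) h = c * cov p f h"
  using expect_scale[of p c "\<lambda>k. f k * h k"] expect_scale[of p c f]
  by (simp add: cov_def algebra_simps)

lemma cum3_add_left: "cum3 p (\<lambda>k. f k + g k) h r = cum3 p f h r + cum3 p g h r"
  by (simp add: cum3_def expect_def algebra_simps sum.distrib)

lemma cum3_scale_left: "cum3 p (\<lambda>k. c * f k) h r = c * cum3 p f h r"
  by (simp add: cum3_def expect_def algebra_simps sum_distrib_left)

lemma cum3_scale_right: "cum3 p f (\<lambda>k. a * g k) (\<lambda>k. b * h k) = a * b * cum3 p f g h"
  by (simp add: cum3_def expect_def algebra_simps sum_distrib_left)

lemma expect_indicator: "expect p (\<lambda>j. if j = a then g j else 0) = p a * g a"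
  by (simp add: expect_def if_distrib[of "(*) (p _)"] cong: if_cong)

lemma cum3_indicators:
  "cum3 p f (\<lambda>j. if j = a then 1 else 0) (\<lambda>j. if j = b then 1 else 0)
     = (if a = b then p a * (f a - expect p f) else 0)
       - p a * p b * ((f a - expect p f) + (f b - expect p f))"
proof -
  have "(\<lambda>j. f j * (if j = a then 1 else 0) * (if j = b then 1 else 0))
      = (\<lambda>j. if j = a then (if a = b then f a else 0) else 0)"
       "(\<lambda>j. (if j = a then 1 else 0) * (if j = b then 1 else 0) :: real)
      = (\<lambda>j. if j = a then (if a = b then 1 else 0) else 0)"
       "\<And>c. (\<lambda>j. f j * (if j = c then 1 else 0)) = (\<lambda>j. if j = c then f j else 0)"
    by (auto simp: fun_eq_iff)
  then show ?thesis
    by (simp add: cum3_def expect_indicator algebra_simps)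
qed

lemma cum3_indicators_square_le:
  fixes p f :: "'k::finite \<Rightarrow> real"
  defines "v \<equiv> \<lambda>k. f k - expect p f"
  shows "(cum3 p f (\<lambda>j. if j = a then 1 else 0) (\<lambda>j. if j = b then 1 else 0))\<^sup>2
    \<le> 2 * (if a = b then (p a)\<^sup>2 * (v a)\<^sup>2 else 0)
      + 4 * ((p a)\<^sup>2 * (v a)\<^sup>2 * (p b)\<^sup>2) + 4 * ((p b)\<^sup>2 * (v b)\<^sup>2 * (p a)\<^sup>2)"
proof -
  have sq_diff: "(X - Y)\<^sup>2 \<le> 2 * X\<^sup>2 + 2 * Y\<^sup>2" for X Y :: real
    using zero_le_power2[of "X + Y"] by (simp add: power2_eq_square algebra_simps)
  have "(p a * p b * (v a + v b))\<^sup>2 = (p a * p b)\<^sup>2 * (v a + v b)\<^sup>2"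
    by (rule power_mult_distrib)
  also have "\<dots> \<le> (p a * p b)\<^sup>2 * (2 * (v a)\<^sup>2 + 2 * (v b)\<^sup>2)"
    using sq_diff[of "v a" "- v b"] by (intro mult_left_mono) simp_all
  finally have "(p a * p b * (v a + v b))\<^sup>2
      \<le> 2 * ((p a)\<^sup>2 * (v a)\<^sup>2 * (p b)\<^sup>2) + 2 * ((p b)\<^sup>2 * (v b)\<^sup>2 * (p a)\<^sup>2)"
    by (simp add: power_mult_distrib algebra_simps)
  moreover have "(if a = b then p a * v a else 0)\<^sup>2 = (if a = b then (p a)\<^sup>2 * (v a)\<^sup>2 else 0)"
    by (simp add: power_mult_distrib)
  ultimately show ?thesis
    using sq_diff[of "if a = b then p a * v a else 0" "p a * p b * (v a + v b)"]
    unfolding cum3_indicators v_def by linarith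
qed

lemma cum3_indicators_sum_squares:
  fixes p :: "'k::finite \<Rightarrow> real"
  assumes p_nonneg: "\<And>k. 0 \<le> p k" and p_sum: "sum p UNIV = 1"
  shows "(\<Sum>a\<in>UNIV. \<Sum>b\<in>UNIV. (cum3 p f (\<lambda>j. if j = a then 1 else 0) (\<lambda>j. if j = b then 1 else 0))\<^sup>2)
    \<le> 10 * (\<Sum>k\<in>UNIV. (f k)\<^sup>2)"
proof -
  define v where "v k = f k - expect p f" for k
  define A where "A = (\<Sum>k\<in>UNIV. (p k)\<^sup>2 * (v k)\<^sup>2)"
  have p_sq: "(\<Sum>k\<in>UNIV. (p k)\<^sup>2) \<le> 1"
    using p_sum sum_mono[of UNIV "\<lambda>k. (p k)\<^sup>2" p]
    by (simp add: power2_eq_square mult_left_le_one_le p_nonneg prob_le_one)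
  have "(\<Sum>a\<in>UNIV. \<Sum>b\<in>UNIV. (cum3 p f (\<lambda>j. if j = a then 1 else 0) (\<lambda>j. if j = b then 1 else 0))\<^sup>2)
      \<le> (\<Sum>a\<in>UNIV. \<Sum>b\<in>UNIV. 2 * (if a = b then (p a)\<^sup>2 * (v a)\<^sup>2 else 0)
        + 4 * ((p a)\<^sup>2 * (v a)\<^sup>2 * (p b)\<^sup>2) + 4 * ((p b)\<^sup>2 * (v b)\<^sup>2 * (p a)\<^sup>2))"
    unfolding v_def by (intro sum_mono cum3_indicators_square_le)
  also have "\<dots> = 2 * A + 8 * (A * (\<Sum>k\<in>UNIV. (p k)\<^sup>2))"
  proof -
    have "(\<Sum>a\<in>UNIV. \<Sum>b\<in>UNIV. if a = b then (p a)\<^sup>2 * (v a)\<^sup>2 else 0) = A"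
      by (simp add: A_def)
    moreover have "(\<Sum>a\<in>UNIV. \<Sum>b\<in>UNIV. (p a)\<^sup>2 * (v a)\<^sup>2 * (p b)\<^sup>2) = A * (\<Sum>k\<in>UNIV. (p k)\<^sup>2)"
      by (simp add: A_def sum_product)
    moreover have "(\<Sum>a\<in>UNIV. \<Sum>b\<in>UNIV. (p b)\<^sup>2 * (v b)\<^sup>2 * (p a)\<^sup>2) = A * (\<Sum>k\<in>UNIV. (p k)\<^sup>2)"
      by (simp add: A_def sum_product mult.commute)
    ultimately show ?thesis
      by (simp add: sum.distrib sum_distrib_left[symmetric])
  qed
  also have "\<dots> \<le> 10 * A"
    using p_sq mult_left_mono[OF p_sq, of A] by (simp add: A_def sum_nonneg)
  also have "A \<le> expect p (\<lambda>k. (v k)\<^sup>2)"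
    unfolding A_def expect_def
    by (intro sum_mono mult_right_mono)
      (simp_all add: power2_eq_square mult_left_le_one_le p_nonneg prob_le_one p_sum)
  also have "\<dots> \<le> expect p (\<lambda>k. (f k)\<^sup>2)"
    unfolding v_def variance_eq[OF p_sum] by simp
  also have "\<dots> \<le> (\<Sum>k\<in>UNIV. (f k)\<^sup>2)"
    using p_nonneg p_sum by (rule expect_square_le_sum_squares)
  finally show ?thesis by simp
qed

section \<open>Softmax\<close>

definition softmax :: "('k::finite \<Rightarrow> real) \<Rightarrow> 'k \<Rightarrow> real" where
  "softmax z k = exp (z k) / (\<Sum>j\<in>UNIV. exp (z j))"

lemma sum_exp_pos:
  fixes z :: "'k::finite \<Rightarrow> real"
  shows "0 < (\<Sum>k\<in>UNIV. exp (z k))"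
  by (rule sum_pos) auto

lemma softmax_nonneg: "0 \<le> softmax z k"
  by (simp add: softmax_def sum_exp_pos less_imp_le)

lemma sum_softmax: "sum (softmax z) UNIV = 1"
  using sum_exp_pos[of z] by (simp add: softmax_def sum_divide_distrib[symmetric])

lemma expect_softmax: "expect (softmax z) f = (\<Sum>k\<in>UNIV. exp (z k) * f k) / (\<Sum>k\<in>UNIV. exp (z k))"
  by (simp add: expect_def softmax_def sum_divide_distrib)

lemma DERIV_sum_exp_affine:
  "((\<lambda>t. \<Sum>k\<in>UNIV. exp (a k + t * b k) * f k) has_real_derivative (\<Sum>k\<in>UNIV. exp (a k) * b k * f k)) (at 0)"
  by (auto intro!: derivative_eq_intros)

lemma DERIV_ln_sum_exp:
  "((\<lambda>t. ln (\<Sum>k\<in>UNIV. exp (a k + t * b k))) has_real_derivative expect (softmax a) b) (at 0)"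
proof -
  have "((\<lambda>t. ln (\<Sum>k\<in>UNIV. exp (a k + t * b k) * 1)) has_real_derivative
      (\<Sum>k\<in>UNIV. exp (a k) * b k * 1) / (\<Sum>k\<in>UNIV. exp (a k) * 1)) (at 0)"
    using sum_exp_pos[of a] by (auto intro!: derivative_eq_intros DERIV_sum_exp_affine)
  then show ?thesis
    by (simp add: expect_softmax mult.commute)
qed

lemma DERIV_expect_softmax:
  "((\<lambda>t. expect (softmax (\<lambda>k. a k + t * b k)) f) has_real_derivative cov (softmax a) f b) (at 0)"
proof -
  define S where "S = (\<Sum>k\<in>UNIV. exp (a k))"
  have S_pos: "0 < S" unfolding S_def by (rule sum_exp_pos)
  have "((\<lambda>t. \<Sum>k\<in>UNIV. exp (a k + t * b k)) has_real_derivative (\<Sum>k\<in>UNIV. exp (a k) * b k)) (at 0)"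
    using DERIV_sum_exp_affine[of a b "\<lambda>_. 1"] by simp
  from DERIV_divide[OF DERIV_sum_exp_affine[of a b f] this] S_pos
  have "((\<lambda>t. (\<Sum>k\<in>UNIV. exp (a k + t * b k) * f k) / (\<Sum>k\<in>UNIV. exp (a k + t * b k)))
      has_real_derivative
        ((\<Sum>k\<in>UNIV. exp (a k) * b k * f k) * S - (\<Sum>k\<in>UNIV. exp (a k) * f k) * (\<Sum>k\<in>UNIV. exp (a k) * b k))
        / (S * S)) (at 0)"
    by (simp add: S_def)
  moreover have "((\<Sum>k\<in>UNIV. exp (a k) * b k * f k) * S - (\<Sum>k\<in>UNIV. exp (a k) * f k) * (\<Sum>k\<in>UNIV. exp (a k) * b k))
        / (S * S) = cov (softmax a) f b"
    using S_pos by (simp add: cov_def expect_softmax S_def[symmetric] field_simps mult_ac)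
  ultimately show ?thesis
    by (simp add: expect_softmax)
qed

lemma DERIV_cov_softmax:
  "((\<lambda>t. cov (softmax (\<lambda>k. a k + t * b k)) f g) has_real_derivative cum3 (softmax a) f g b) (at 0)"
proof -
  have "((\<lambda>t. cov (softmax (\<lambda>k. a k + t * b k)) f g) has_real_derivative
      cov (softmax a) (\<lambda>k. f k * g k) b
      - (cov (softmax a) f b * expect (softmax a) g + expect (softmax a) f * cov (softmax a) g b)) (at 0)"
    unfolding cov_def[of _ f g]
    using DERIV_diff[OF DERIV_expect_softmax[of a b "\<lambda>k. f k * g k"]
        DERIV_mult'[OF DERIV_expect_softmax[of a b f] DERIV_expect_softmax[of a b g]]]
    by (simp add: ac_simps)
  moreover have "cov (softmax a) (\<lambda>k. f k * g k) b
      - (cov (softmax a) f b * expect (softmax a) g + expect (softmax a) f * cov (softmax a) g b)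
      = cum3 (softmax a) f g b"
    by (simp add: cov_def cum3_def algebra_simps)
  ultimately show ?thesis by simp
qed

section \<open>Spectral and tensor norms\<close>

lemma abs_le_one_of_sum_squares:
  fixes x :: "'i::finite \<Rightarrow> real"
  assumes "(\<Sum>i\<in>UNIV. (x i)\<^sup>2) \<le> 1"
  shows "\<bar>x i\<bar> \<le> 1"
proof -
  have "(x i)\<^sup>2 \<le> 1"
    using member_le_sum[of i UNIV "\<lambda>i. (x i)\<^sup>2"] assms by simp
  then show ?thesis
    by (simp add: abs_square_le_1)
qed

lemma bdd_above_spec_norm_set:
  fixes M :: "'i::finite \<Rightarrow> 'i \<Rightarrow> real"
  shows "bdd_above {(\<Sum>i\<in>UNIV. \<Sum>j\<in>UNIV. x i * M i j * y j) | x y.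
      (\<Sum>i\<in>UNIV. (x i)\<^sup>2) \<le> 1 \<and> (\<Sum>j\<in>UNIV. (y j)\<^sup>2) \<le> 1}"
proof (rule bdd_aboveI, safe)
  fix x y :: "'i \<Rightarrow> real"
  assume x: "(\<Sum>i\<in>UNIV. (x i)\<^sup>2) \<le> 1" and y: "(\<Sum>j\<in>UNIV. (y j)\<^sup>2) \<le> 1"
  have "x i * M i j * y j \<le> \<bar>M i j\<bar>" for i j
  proof -
    have "x i * M i j * y j \<le> \<bar>x i\<bar> * \<bar>M i j\<bar> * \<bar>y j\<bar>"
      by (simp add: abs_mult[symmetric])
    also have "\<dots> \<le> 1 * \<bar>M i j\<bar> * 1"
      using abs_le_one_of_sum_squares[OF x] abs_le_one_of_sum_squares[OF y]
      by (intro mult_mono) auto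
    finally show ?thesis by simp
  qed
  then show "(\<Sum>i\<in>UNIV. \<Sum>j\<in>UNIV. x i * M i j * y j) \<le> (\<Sum>i\<in>UNIV. \<Sum>j\<in>UNIV. \<bar>M i j\<bar>)"
    by (intro sum_mono)
qed

lemma spec_norm_upper:
  fixes M :: "'i::finite \<Rightarrow> 'i \<Rightarrow> real"
  assumes "(\<Sum>i\<in>UNIV. (x i)\<^sup>2) \<le> 1" "(\<Sum>j\<in>UNIV. (y j)\<^sup>2) \<le> 1"
  shows "(\<Sum>i\<in>UNIV. \<Sum>j\<in>UNIV. x i * M i j * y j) \<le> spec_norm M"
  unfolding spec_norm_def using assms by (intro cSup_upper bdd_above_spec_norm_set) blast

lemma spec_norm_nonneg: "0 \<le> spec_norm (M :: 'i::finite \<Rightarrow> 'i \<Rightarrow> real)"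
  using spec_norm_upper[of "\<lambda>_. 0" "\<lambda>_. 0" M] by simp

lemma spec_norm_least:
  fixes M :: "'i::finite \<Rightarrow> 'i \<Rightarrow> real"
  assumes "\<And>x y. (\<Sum>i\<in>UNIV. (x i)\<^sup>2) \<le> 1 \<Longrightarrow> (\<Sum>j\<in>UNIV. (y j)\<^sup>2) \<le> 1 \<Longrightarrow>
    (\<Sum>i\<in>UNIV. \<Sum>j\<in>UNIV. x i * M i j * y j) \<le> B"
  shows "spec_norm M \<le> B"
  unfolding spec_norm_def
proof (rule cSup_least)
  show "{(\<Sum>i\<in>UNIV. \<Sum>j\<in>UNIV. x i * M i j * y j) | x y.
      (\<Sum>i\<in>UNIV. (x i)\<^sup>2) \<le> 1 \<and> (\<Sum>j\<in>UNIV. (y j)\<^sup>2) \<le> 1} \<noteq> {}"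
    by (auto intro!: exI[of _ "\<lambda>_. 0"])
qed (use assms in blast)

lemma tensor_norm_12_3_least:
  fixes A :: "'i::finite \<Rightarrow> 'i \<Rightarrow> 'i \<Rightarrow> real"
  assumes "\<And>x y. (\<Sum>i\<in>UNIV. \<Sum>j\<in>UNIV. (x i j)\<^sup>2) \<le> 1 \<Longrightarrow> (\<Sum>k\<in>UNIV. (y k)\<^sup>2) \<le> 1 \<Longrightarrow>
    (\<Sum>i\<in>UNIV. \<Sum>j\<in>UNIV. \<Sum>k\<in>UNIV. A i j k * x i j * y k) \<le> B"
  shows "tensor_norm_12_3 A \<le> B"
  unfolding tensor_norm_12_3_def
proof (rule cSup_least)
  show "{(\<Sum>i\<in>UNIV. \<Sum>j\<in>UNIV. \<Sum>k\<in>UNIV. A i j k * x i j * y k) | x y.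
      (\<Sum>i\<in>UNIV. \<Sum>j\<in>UNIV. (x i j)\<^sup>2) \<le> 1 \<and> (\<Sum>k\<in>UNIV. (y k)\<^sup>2) \<le> 1} \<noteq> {}"
    by (auto intro!: exI[of _ "\<lambda>_ _. 0"] exI[of _ "\<lambda>_. 0"])
qed (use assms in blast)

lemma quadratic_form_le_spec_norm:
  fixes M :: "'i::finite \<Rightarrow> 'i \<Rightarrow> real"
  shows "(\<Sum>a\<in>UNIV. \<Sum>b\<in>UNIV. v a * M a b * v b) \<le> spec_norm M * (\<Sum>a\<in>UNIV. (v a)\<^sup>2)"
proof (cases "(\<Sum>a\<in>UNIV. (v a)\<^sup>2) = 0")
  case True
  then have "v a = 0" for a
    by (simp add: sum_nonneg_eq_0_iff)
  then show ?thesis by simp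
next
  case False
  define r where "r = sqrt (\<Sum>a\<in>UNIV. (v a)\<^sup>2)"
  have r_pos: "0 < r"
    using False by (simp add: r_def sum_nonneg order_le_neq_trans)
  have r_sq: "r\<^sup>2 = (\<Sum>a\<in>UNIV. (v a)\<^sup>2)"
    by (simp add: r_def sum_nonneg)
  have unit: "(\<Sum>a\<in>UNIV. (v a / r)\<^sup>2) \<le> 1"
    using r_pos by (simp add: power_divide sum_divide_distrib[symmetric] r_sq)
  have "(\<Sum>a\<in>UNIV. \<Sum>b\<in>UNIV. v a * M a b * v b) / r\<^sup>2
      = (\<Sum>a\<in>UNIV. \<Sum>b\<in>UNIV. (v a / r) * M a b * (v b / r))"
    by (simp add: sum_divide_distrib power2_eq_square)
  also have "\<dots> \<le> spec_norm M"
    using unit unit by (rule spec_norm_upper)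
  finally show ?thesis
    using r_pos by (simp add: r_sq[symmetric] divide_le_eq)
qed

lemma power2_norm_vec: "(norm v)\<^sup>2 = (\<Sum>k\<in>UNIV. (norm (v $ k))\<^sup>2)"
  for v :: "'a::real_inner^'n::finite"
  by (simp add: power2_norm_eq_inner inner_vec_def)

lemma sum_inner_squares_le_spec_norm:
  fixes x :: "'l \<Rightarrow> real^'o::finite"
  shows "(\<Sum>l\<in>L. c l * (x l \<bullet> z)\<^sup>2)
    \<le> spec_norm (\<lambda>a b. \<Sum>l\<in>L. x l $ a * x l $ b * c l) * (norm z)\<^sup>2"
proof -
  have "(\<Sum>l\<in>L. c l * (x l \<bullet> z)\<^sup>2)
      = (\<Sum>a\<in>UNIV. \<Sum>b\<in>UNIV. z $ a * (\<Sum>l\<in>L. x l $ a * x l $ b * c l) * z $ b)"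
    by (simp add: inner_vec_def power2_eq_square sum_product sum_distrib_left sum_distrib_right
        sum.swap[of _ L] mult_ac)
  also have "\<dots> \<le> spec_norm (\<lambda>a b. \<Sum>l\<in>L. x l $ a * x l $ b * c l) * (\<Sum>a\<in>UNIV. (z $ a)\<^sup>2)"
    by (rule quadratic_form_le_spec_norm)
  also have "(\<Sum>a\<in>UNIV. (z $ a)\<^sup>2) = (norm z)\<^sup>2"
    by (simp add: power2_norm_vec)
  finally show ?thesis .
qed

lemma sum_swap3: "(\<Sum>a\<in>A. \<Sum>b\<in>B. \<Sum>c\<in>C. f a b c) = (\<Sum>b\<in>B. \<Sum>c\<in>C. \<Sum>a\<in>A. f a b c)"
  by (simp add: sum.swap[of _ A] sum.swap[of _ A C])

lemma sum_squares_weighted_gram_le: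
  fixes x :: "'l \<Rightarrow> real^'o::finite"
  shows "(\<Sum>a\<in>UNIV. \<Sum>b\<in>UNIV. (\<Sum>l\<in>L. x l $ a * x l $ b * m l)\<^sup>2)
    \<le> (\<Sum>l\<in>L. (m l)\<^sup>2 * (\<Sum>l'\<in>L. (x l \<bullet> x l')\<^sup>2))"
proof -
  have "(\<Sum>a\<in>UNIV. \<Sum>b\<in>UNIV. (\<Sum>l\<in>L. x l $ a * x l $ b * m l)\<^sup>2)
      = (\<Sum>a\<in>UNIV. \<Sum>b\<in>UNIV. \<Sum>l\<in>L. \<Sum>l'\<in>L. m l * m l' * (x l $ a * x l' $ a) * (x l $ b * x l' $ b))"
    by (simp add: power2_eq_square sum_product mult_ac)
  also have "\<dots> = (\<Sum>a\<in>UNIV. \<Sum>l\<in>L. \<Sum>l'\<in>L. \<Sum>b\<in>UNIV. m l * m l' * (x l $ a * x l' $ a) * (x l $ b * x l' $ b))"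
    by (rule sum.cong[OF refl], rule sum_swap3)
  also have "\<dots> = (\<Sum>l\<in>L. \<Sum>l'\<in>L. \<Sum>a\<in>UNIV. \<Sum>b\<in>UNIV. m l * m l' * (x l $ a * x l' $ a) * (x l $ b * x l' $ b))"
    by (rule sum_swap3)
  also have "\<dots> = (\<Sum>l\<in>L. \<Sum>l'\<in>L. m l * m l' * ((\<Sum>a\<in>UNIV. x l $ a * x l' $ a) * (\<Sum>b\<in>UNIV. x l $ b * x l' $ b)))"
    by (simp add: sum_product sum_distrib_left mult_ac)
  also have "\<dots> = (\<Sum>l\<in>L. \<Sum>l'\<in>L. m l * m l' * (x l \<bullet> x l')\<^sup>2)"
    by (simp add: inner_vec_def power2_eq_square)
  also have "\<dots> \<le> (\<Sum>l\<in>L. \<Sum>l'\<in>L. ((m l)\<^sup>2 + (m l')\<^sup>2) / 2 * (x l \<bullet> x l')\<^sup>2)"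
  proof (intro sum_mono mult_right_mono)
    show "m l * m l' \<le> ((m l)\<^sup>2 + (m l')\<^sup>2) / 2" for l l'
      using sum_squares_bound[of "m l" "m l'"] by simp
  qed simp
  also have "\<dots> = (\<Sum>l\<in>L. \<Sum>l'\<in>L. (m l)\<^sup>2 * (x l \<bullet> x l')\<^sup>2)"
    by (simp add: add_divide_distrib distrib_right sum.distrib sum_divide_distrib[symmetric]
        sum.swap[of "\<lambda>l l'. (m l')\<^sup>2 * (x l \<bullet> x l')\<^sup>2" L L] inner_commute)
  finally show ?thesis
    by (simp add: sum_distrib_left)
qed

lemma double_sum_Cauchy_Schwarz:
  fixes f g :: "'a \<Rightarrow> 'b \<Rightarrow> real"
  shows "(\<Sum>i\<in>A. \<Sum>j\<in>B. f i j * g i j)\<^sup>2 \<le> (\<Sum>i\<in>A. \<Sum>j\<in>B. (f i j)\<^sup>2) * (\<Sum>i\<in>A. \<Sum>j\<in>B. (g i j)\<^sup>2)"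
  using Cauchy_Schwarz_ineq_sum[of "\<lambda>(i, j). f i j" "\<lambda>(i, j). g i j" "A \<times> B"]
  by (simp add: sum.cartesian_product split_def)

section \<open>Derivatives of the potential\<close>

lemma sum_UNIV_prod: "(\<Sum>i\<in>UNIV. f i) = (\<Sum>k\<in>UNIV. \<Sum>a\<in>UNIV. f (k, a))"
  by (simp add: UNIV_Times_UNIV[symmetric] sum.cartesian_product del: UNIV_Times_UNIV)

lemma inner_coord_coord: "coord i \<bullet> coord j = (if i = j then 1 else 0)"
  by (cases i, cases j) (simp add: coord_def inner_axis_axis)

lemma norm_sum_coord: "(norm (\<Sum>i\<in>UNIV. u i *\<^sub>R coord i))\<^sup>2 = (\<Sum>i\<in>UNIV. (u i)\<^sup>2)"
  unfolding power2_norm_eq_inner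
  by (simp add: inner_sum_left inner_sum_right inner_coord_coord power2_eq_square
      if_distrib[of "\<lambda>r. _ * r"] cong: if_cong)

lemma linear_sum_coord:
  assumes "linear \<phi>"
  shows "\<phi> (\<Sum>i\<in>UNIV. u i *\<^sub>R coord i) = (\<Sum>i\<in>UNIV. u i * \<phi> (coord i))"
  by (simp add: linear_sum[OF assms] linear_scale[OF assms])

lemma pdiff_eqI:
  assumes "\<And>q. ((\<lambda>t. f (q + t *\<^sub>R coord i)) has_real_derivative g q) (at 0)"
  shows "pdiff i f = g"
  unfolding pdiff_def using assms by (intro ext DERIV_imp_deriv)

definition logits :: "real^'o::finite \<Rightarrow> real^'o^'m::finite \<Rightarrow> 'm \<Rightarrow> real" where
  "logits \<xi> q k = \<xi> \<bullet> q $ k"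

lemma logits_add: "logits \<xi> (e + e') = (\<lambda>k. logits \<xi> e k + logits \<xi> e' k)"
  by (simp add: fun_eq_iff logits_def inner_add_right)

lemma logits_scale: "logits \<xi> (c *\<^sub>R e) = (\<lambda>k. c * logits \<xi> e k)"
  by (simp add: fun_eq_iff logits_def)

lemma logits_add_scale: "logits \<xi> (q + t *\<^sub>R e) = (\<lambda>k. logits \<xi> q k + t * logits \<xi> e k)"
  by (simp add: fun_eq_iff logits_def inner_add_right)

lemma logits_coord: "logits \<xi> (coord (k, a)) = (\<lambda>j. \<xi> $ a * (if j = k then 1 else 0))"
proof -
  have "coord (k, a) $ j = (if j = k then axis a 1 else 0)" for j
    by (simp add: coord_def axis_def)
  then show ?thesis
    by (simp add: fun_eq_iff logits_def inner_axis)
qed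

lemma ln_lik: "ln (lik x y l q) = logits (x l) q (y l) - ln (\<Sum>k\<in>UNIV. exp (logits (x l) q k))"
  using sum_exp_pos[of "logits (x l) q"] by (simp add: lik_def logits_def ln_div)

definition potU_deriv1 :: "real \<Rightarrow> nat \<Rightarrow> (nat \<Rightarrow> real^'o::finite) \<Rightarrow> (nat \<Rightarrow> 'm::finite)
    \<Rightarrow> real^'o^'m \<Rightarrow> real^'o^'m \<Rightarrow> real" where
  "potU_deriv1 \<sigma>0 N x y e q = q \<bullet> e / \<sigma>0\<^sup>2
     - (\<Sum>l=1..N. logits (x l) e (y l) - expect (softmax (logits (x l) q)) (logits (x l) e))"

definition potU_deriv2 :: "real \<Rightarrow> nat \<Rightarrow> (nat \<Rightarrow> real^'o::finite)
    \<Rightarrow> real^'o^'m::finite \<Rightarrow> real^'o^'m \<Rightarrow> real^'o^'m \<Rightarrow> real" where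
  "potU_deriv2 \<sigma>0 N x e e' q = e \<bullet> e' / \<sigma>0\<^sup>2
     + (\<Sum>l=1..N. cov (softmax (logits (x l) q)) (logits (x l) e) (logits (x l) e'))"

definition potU_deriv3 :: "nat \<Rightarrow> (nat \<Rightarrow> real^'o::finite)
    \<Rightarrow> real^'o^'m::finite \<Rightarrow> real^'o^'m \<Rightarrow> real^'o^'m \<Rightarrow> real^'o^'m \<Rightarrow> real" where
  "potU_deriv3 N x e e' e'' q =
     (\<Sum>l=1..N. cum3 (softmax (logits (x l) q)) (logits (x l) e) (logits (x l) e') (logits (x l) e''))"

lemma DERIV_potU:
  "((\<lambda>t. potU \<sigma>0 c N x y (q + t *\<^sub>R e)) has_real_derivative potU_deriv1 \<sigma>0 N x y e q) (at 0)"
proof -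
  have norm_sq: "(norm (q + t *\<^sub>R e))\<^sup>2 = q \<bullet> q + 2 * t * (q \<bullet> e) + t\<^sup>2 * (e \<bullet> e)" for t
    unfolding power2_norm_eq_inner
    by (simp add: inner_add_left inner_add_right inner_commute algebra_simps power2_eq_square)
  have "((\<lambda>t. q \<bullet> q + 2 * t * (q \<bullet> e) + t\<^sup>2 * (e \<bullet> e)) has_real_derivative 2 * (q \<bullet> e)) (at 0)"
    by (auto intro!: derivative_eq_intros)
  from DERIV_add[OF DERIV_cdivide[OF this, of "2 * \<sigma>0\<^sup>2"] DERIV_const[of c]]
  have "((\<lambda>t. (q \<bullet> q + 2 * t * (q \<bullet> e) + t\<^sup>2 * (e \<bullet> e)) / (2 * \<sigma>0\<^sup>2) + c) has_real_derivative
      q \<bullet> e / \<sigma>0\<^sup>2) (at 0)"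
    by simp
  moreover have "((\<lambda>t. \<Sum>l=1..N. logits (x l) q (y l) + t * logits (x l) e (y l)
        - ln (\<Sum>k\<in>UNIV. exp (logits (x l) q k + t * logits (x l) e k))) has_real_derivative
      (\<Sum>l=1..N. logits (x l) e (y l) - expect (softmax (logits (x l) q)) (logits (x l) e))) (at 0)"
    by (intro DERIV_sum DERIV_diff DERIV_ln_sum_exp) (auto intro!: derivative_eq_intros)
  ultimately show ?thesis
    unfolding potU_def ln_lik logits_add_scale norm_sq potU_deriv1_def by (rule DERIV_diff)
qed

lemma DERIV_potU_deriv1:
  "((\<lambda>t. potU_deriv1 \<sigma>0 N x y e (q + t *\<^sub>R e')) has_real_derivative potU_deriv2 \<sigma>0 N x e e' q) (at 0)"
proof -
  have "((\<lambda>t. (q \<bullet> e + t * (e' \<bullet> e)) / \<sigma>0\<^sup>2) has_real_derivative e \<bullet> e' / \<sigma>0\<^sup>2) (at 0)"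
    by (rule DERIV_cdivide) (auto intro!: derivative_eq_intros simp: inner_commute)
  moreover have "((\<lambda>t. \<Sum>l=1..N. logits (x l) e (y l)
        - expect (softmax (\<lambda>k. logits (x l) q k + t * logits (x l) e' k)) (logits (x l) e)) has_real_derivative
      (\<Sum>l=1..N. 0 - cov (softmax (logits (x l) q)) (logits (x l) e) (logits (x l) e'))) (at 0)"
    by (intro DERIV_sum DERIV_diff DERIV_expect_softmax DERIV_const)
  ultimately have "((\<lambda>t. potU_deriv1 \<sigma>0 N x y e (q + t *\<^sub>R e')) has_real_derivative
      e \<bullet> e' / \<sigma>0\<^sup>2 - (\<Sum>l=1..N. 0 - cov (softmax (logits (x l) q)) (logits (x l) e) (logits (x l) e')))
      (at 0)"
    unfolding potU_deriv1_def logits_add_scale inner_add_left inner_scaleR_left by (rule DERIV_diff)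
  then show ?thesis
    by (simp add: potU_deriv2_def sum_negf)
qed

lemma DERIV_potU_deriv2:
  "((\<lambda>t. potU_deriv2 \<sigma>0 N x e e' (q + t *\<^sub>R e'')) has_real_derivative potU_deriv3 N x e e' e'' q) (at 0)"
proof -
  have "((\<lambda>t. \<Sum>l=1..N. cov (softmax (\<lambda>k. logits (x l) q k + t * logits (x l) e'' k))
      (logits (x l) e) (logits (x l) e')) has_real_derivative potU_deriv3 N x e e' e'' q) (at 0)"
    unfolding potU_deriv3_def by (intro DERIV_sum DERIV_cov_softmax)
  from DERIV_add[OF DERIV_const this] show ?thesis
    unfolding potU_deriv2_def logits_add_scale by simp
qed

lemma pdiff_potU: "pdiff k (potU \<sigma>0 c N x y) = potU_deriv1 \<sigma>0 N x y (coord k)"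
  by (intro pdiff_eqI DERIV_potU)

lemma pdiff_potU_deriv1: "pdiff j (potU_deriv1 \<sigma>0 N x y e) = potU_deriv2 \<sigma>0 N x e (coord j)"
  by (intro pdiff_eqI DERIV_potU_deriv1)

lemma pdiff_potU_deriv2: "pdiff i (potU_deriv2 \<sigma>0 N x e e') = potU_deriv3 N x e e' (coord i)"
  by (intro pdiff_eqI DERIV_potU_deriv2)

lemma potU_deriv2_commute: "potU_deriv2 \<sigma>0 N x e e' q = potU_deriv2 \<sigma>0 N x e' e q"
  by (simp add: potU_deriv2_def inner_commute cov_commute)

lemma linear_potU_deriv2: "linear (\<lambda>e. potU_deriv2 \<sigma>0 N x e e' q)"
  by (simp add: linear_iff potU_deriv2_def logits_add logits_scale cov_add_left cov_scale_left
      inner_add_left add_divide_distrib sum.distrib sum_distrib_left algebra_simps)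

lemma linear_potU_deriv3: "linear (\<lambda>e. potU_deriv3 N x e e' e'' q)"
  by (simp add: linear_iff potU_deriv3_def logits_add logits_scale cum3_add_left cum3_scale_left
      sum.distrib sum_distrib_left)

section \<open>Bounds on the second and third derivatives\<close>

lemma sum_logits_squares_le:
  fixes x :: "'l \<Rightarrow> real^'o::finite" and e :: "real^'o^'m::finite"
  shows "(\<Sum>l\<in>L. c l * (\<Sum>k\<in>UNIV. (logits (x l) e k)\<^sup>2))
    \<le> spec_norm (\<lambda>a b. \<Sum>l\<in>L. x l $ a * x l $ b * c l) * (norm e)\<^sup>2"
proof -
  have "(\<Sum>l\<in>L. c l * (\<Sum>k\<in>UNIV. (logits (x l) e k)\<^sup>2)) = (\<Sum>k\<in>UNIV. \<Sum>l\<in>L. c l * (x l \<bullet> e $ k)\<^sup>2)"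
    by (simp add: logits_def sum_distrib_left sum.swap[of _ L])
  also have "\<dots> \<le> (\<Sum>k\<in>UNIV. spec_norm (\<lambda>a b. \<Sum>l\<in>L. x l $ a * x l $ b * c l) * (norm (e $ k))\<^sup>2)"
    by (intro sum_mono sum_inner_squares_le_spec_norm)
  also have "\<dots> = spec_norm (\<lambda>a b. \<Sum>l\<in>L. x l $ a * x l $ b * c l) * (norm e)\<^sup>2"
    by (simp add: sum_distrib_left power2_norm_vec[of e])
  finally show ?thesis .
qed

lemma potU_deriv2_le:
  assumes "0 < \<sigma>0" "norm e \<le> 1" "norm e' \<le> 1"
  shows "potU_deriv2 \<sigma>0 N x e e' q \<le> 1 / \<sigma>0\<^sup>2 + spec_norm (\<lambda>a b. \<Sum>l=1..N. x l $ a * x l $ b)"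
proof -
  define gram where "gram = spec_norm (\<lambda>a b. \<Sum>l=1..N. x l $ a * x l $ b)"
  have "e \<bullet> e' \<le> 1"
    using norm_cauchy_schwarz[of e e'] mult_le_one[OF assms(2) _ assms(3)] by simp
  then have inner_term: "e \<bullet> e' / \<sigma>0\<^sup>2 \<le> 1 / \<sigma>0\<^sup>2"
    using assms(1) by (simp add: divide_right_mono)
  have "2 * (\<Sum>l=1..N. cov (softmax (logits (x l) q)) (logits (x l) e) (logits (x l) e'))
      = (\<Sum>l=1..N. 2 * cov (softmax (logits (x l) q)) (logits (x l) e) (logits (x l) e'))"
    by (simp add: sum_distrib_left)
  also have "\<dots> \<le> (\<Sum>l=1..N. 1 * (\<Sum>k\<in>UNIV. (logits (x l) e k)\<^sup>2) + 1 * (\<Sum>k\<in>UNIV. (logits (x l) e' k)\<^sup>2))"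
    by (intro sum_mono) (simp add: cov_le_sum_squares softmax_nonneg sum_softmax)
  also have "\<dots> = (\<Sum>l=1..N. 1 * (\<Sum>k\<in>UNIV. (logits (x l) e k)\<^sup>2)) + (\<Sum>l=1..N. 1 * (\<Sum>k\<in>UNIV. (logits (x l) e' k)\<^sup>2))"
    by (rule sum.distrib)
  also have "\<dots> \<le> gram * (norm e)\<^sup>2 + gram * (norm e')\<^sup>2"
    using sum_logits_squares_le[where L = "{1..N}" and c = "\<lambda>_. 1" and x = x and e = e]
      sum_logits_squares_le[where L = "{1..N}" and c = "\<lambda>_. 1" and x = x and e = e']
    by (simp add: gram_def)
  also have "\<dots> \<le> gram * 1 + gram * 1"
    using assms(2,3) spec_norm_nonneg[of "\<lambda>a b. \<Sum>l=1..N. x l $ a * x l $ b"]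
    by (intro add_mono mult_left_mono) (simp_all add: gram_def power_le_one)
  finally have "(\<Sum>l=1..N. cov (softmax (logits (x l) q)) (logits (x l) e) (logits (x l) e')) \<le> gram"
    by simp
  with inner_term show ?thesis
    by (simp add: potU_deriv2_def gram_def)
qed

lemma spec_norm_hessian_potU_le:
  fixes x :: "nat \<Rightarrow> real^'o::finite" and y :: "nat \<Rightarrow> 'm::finite"
  assumes "0 < \<sigma>0"
  shows "spec_norm (\<lambda>i j. pdiff i (pdiff j (potU \<sigma>0 c N x y)) q)
    \<le> 1 / \<sigma>0\<^sup>2 + spec_norm (\<lambda>a b. \<Sum>l=1..N. x l $ a * x l $ b)"
proof (rule spec_norm_least)
  fix u v :: "'m \<times> 'o \<Rightarrow> real"
  assume u: "(\<Sum>i\<in>UNIV. (u i)\<^sup>2) \<le> 1" and v: "(\<Sum>j\<in>UNIV. (v j)\<^sup>2) \<le> 1"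
  define U where "U = (\<Sum>i\<in>UNIV. u i *\<^sub>R coord i)"
  define V where "V = (\<Sum>j\<in>UNIV. v j *\<^sub>R coord j)"
  have "(\<Sum>i\<in>UNIV. \<Sum>j\<in>UNIV. u i * pdiff i (pdiff j (potU \<sigma>0 c N x y)) q * v j)
      = (\<Sum>i\<in>UNIV. u i * (\<Sum>j\<in>UNIV. v j * potU_deriv2 \<sigma>0 N x (coord j) (coord i) q))"
    by (simp add: pdiff_potU pdiff_potU_deriv1 sum_distrib_left mult_ac)
  also have "\<dots> = (\<Sum>i\<in>UNIV. u i * potU_deriv2 \<sigma>0 N x V (coord i) q)"
    by (simp add: V_def linear_sum_coord[OF linear_potU_deriv2])
  also have "\<dots> = (\<Sum>i\<in>UNIV. u i * potU_deriv2 \<sigma>0 N x (coord i) V q)"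
    by (simp add: potU_deriv2_commute[of _ _ _ V])
  also have "\<dots> = potU_deriv2 \<sigma>0 N x U V q"
    by (simp add: U_def linear_sum_coord[OF linear_potU_deriv2])
  also have "\<dots> \<le> 1 / \<sigma>0\<^sup>2 + spec_norm (\<lambda>a b. \<Sum>l=1..N. x l $ a * x l $ b)"
    using u v by (intro potU_deriv2_le assms) (simp_all add: U_def V_def power2_le_imp_le norm_sum_coord)
  finally show "(\<Sum>i\<in>UNIV. \<Sum>j\<in>UNIV. u i * pdiff i (pdiff j (potU \<sigma>0 c N x y)) q * v j)
      \<le> 1 / \<sigma>0\<^sup>2 + spec_norm (\<lambda>a b. \<Sum>l=1..N. x l $ a * x l $ b)" .
qed

lemma potU_deriv3_coord_coord:
  "potU_deriv3 N x e (coord (k2, a2)) (coord (k1, a1)) q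
    = (\<Sum>l=1..N. x l $ a1 * x l $ a2 * cum3 (softmax (logits (x l) q)) (logits (x l) e)
        (\<lambda>j. if j = k2 then 1 else 0) (\<lambda>j. if j = k1 then 1 else 0))"
  by (simp add: potU_deriv3_def logits_coord cum3_scale_right mult_ac)

lemma sum_squares_potU_deriv3_le:
  fixes x :: "nat \<Rightarrow> real^'o::finite" and e :: "real^'o^'m::finite"
  shows "(\<Sum>i\<in>UNIV. \<Sum>j\<in>UNIV. (potU_deriv3 N x e (coord j) (coord i) q)\<^sup>2)
    \<le> 10 * spec_norm (\<lambda>a b. \<Sum>l=1..N. x l $ a * x l $ b * (\<Sum>k=1..N. (x l \<bullet> x k)\<^sup>2)) * (norm e)\<^sup>2"
proof -
  define M where "M l a b = cum3 (softmax (logits (x l) q)) (logits (x l) e)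
      (\<lambda>j. if j = a then 1 else 0) (\<lambda>j. if j = b then 1 else 0)" for l a b
  define s where "s l = (\<Sum>k=1..N. (x l \<bullet> x k)\<^sup>2)" for l
  have M_bound: "(\<Sum>k1\<in>UNIV. \<Sum>k2\<in>UNIV. (M l k2 k1)\<^sup>2) \<le> 10 * (\<Sum>k\<in>UNIV. (logits (x l) e k)\<^sup>2)" for l
  proof -
    have "(\<Sum>k1\<in>UNIV. \<Sum>k2\<in>UNIV. (M l k2 k1)\<^sup>2) = (\<Sum>a\<in>UNIV. \<Sum>b\<in>UNIV. (M l a b)\<^sup>2)"
      by (rule sum.swap)
    then show ?thesis
      by (simp add: M_def cum3_indicators_sum_squares softmax_nonneg sum_softmax)
  qed
  have "(\<Sum>i\<in>UNIV. \<Sum>j\<in>UNIV. (potU_deriv3 N x e (coord j) (coord i) q)\<^sup>2)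
      = (\<Sum>k1\<in>UNIV. \<Sum>a1\<in>UNIV. \<Sum>k2\<in>UNIV. \<Sum>a2\<in>UNIV. (\<Sum>l=1..N. x l $ a1 * x l $ a2 * M l k2 k1)\<^sup>2)"
    by (simp add: sum_UNIV_prod potU_deriv3_coord_coord M_def)
  also have "\<dots> = (\<Sum>k1\<in>UNIV. \<Sum>k2\<in>UNIV. \<Sum>a1\<in>UNIV. \<Sum>a2\<in>UNIV. (\<Sum>l=1..N. x l $ a1 * x l $ a2 * M l k2 k1)\<^sup>2)"
    by (rule sum.cong[OF refl], rule sum.swap)
  also have "\<dots> \<le> (\<Sum>k1\<in>UNIV. \<Sum>k2\<in>UNIV. \<Sum>l=1..N. (M l k2 k1)\<^sup>2 * s l)"
    unfolding s_def by (intro sum_mono sum_squares_weighted_gram_le)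
  also have "\<dots> = (\<Sum>l=1..N. \<Sum>k1\<in>UNIV. \<Sum>k2\<in>UNIV. (M l k2 k1)\<^sup>2 * s l)"
    by (rule trans[OF sum_swap3 sum_swap3])
  also have "\<dots> = (\<Sum>l=1..N. s l * (\<Sum>k1\<in>UNIV. \<Sum>k2\<in>UNIV. (M l k2 k1)\<^sup>2))"
    by (simp add: sum_distrib_left mult.commute)
  also have "\<dots> \<le> (\<Sum>l=1..N. s l * (10 * (\<Sum>k\<in>UNIV. (logits (x l) e k)\<^sup>2)))"
    by (intro sum_mono mult_left_mono M_bound) (simp add: s_def sum_nonneg)
  also have "\<dots> = 10 * (\<Sum>l=1..N. s l * (\<Sum>k\<in>UNIV. (logits (x l) e k)\<^sup>2))"
    by (simp add: sum_distrib_left mult.left_commute)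
  also have "\<dots> \<le> 10 * (spec_norm (\<lambda>a b. \<Sum>l=1..N. x l $ a * x l $ b * s l) * (norm e)\<^sup>2)"
    using sum_logits_squares_le[where L = "{1..N}" and c = s and x = x and e = e] by simp
  finally show ?thesis
    by (simp add: s_def mult.assoc)
qed

lemma tensor_norm_third_derivative_potU_le:
  fixes x :: "nat \<Rightarrow> real^'o::finite" and y :: "nat \<Rightarrow> 'm::finite"
  shows "tensor_norm_12_3 (\<lambda>i j k. pdiff i (pdiff j (pdiff k (potU \<sigma>0 c N x y))) q)
    \<le> 6 * sqrt (spec_norm (\<lambda>a b. \<Sum>l=1..N. x l $ a * x l $ b * (\<Sum>k=1..N. (x l \<bullet> x k)\<^sup>2)))"
proof (rule tensor_norm_12_3_least)
  fix X :: "'m \<times> 'o \<Rightarrow> 'm \<times> 'o \<Rightarrow> real" and Y :: "'m \<times> 'o \<Rightarrow> real"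
  assume X: "(\<Sum>i\<in>UNIV. \<Sum>j\<in>UNIV. (X i j)\<^sup>2) \<le> 1" and Y: "(\<Sum>k\<in>UNIV. (Y k)\<^sup>2) \<le> 1"
  define gram where "gram = spec_norm (\<lambda>a b. \<Sum>l=1..N. x l $ a * x l $ b * (\<Sum>k=1..N. (x l \<bullet> x k)\<^sup>2))"
  define E where "E = (\<Sum>k\<in>UNIV. Y k *\<^sub>R coord k)"
  define T where "T i j = potU_deriv3 N x E (coord j) (coord i) q" for i j
  have gram_nonneg: "0 \<le> gram"
    unfolding gram_def by (rule spec_norm_nonneg)
  have entry: "(\<Sum>k\<in>UNIV. pdiff i (pdiff j (pdiff k (potU \<sigma>0 c N x y))) q * X i j * Y k)
      = X i j * T i j" for i j
  proof -
    have "(\<Sum>k\<in>UNIV. pdiff i (pdiff j (pdiff k (potU \<sigma>0 c N x y))) q * X i j * Y k)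
        = X i j * (\<Sum>k\<in>UNIV. Y k * potU_deriv3 N x (coord k) (coord j) (coord i) q)"
      by (simp add: pdiff_potU pdiff_potU_deriv1 pdiff_potU_deriv2 sum_distrib_left mult_ac)
    also have "\<dots> = X i j * T i j"
      by (simp add: T_def E_def linear_sum_coord[OF linear_potU_deriv3])
    finally show ?thesis .
  qed
  have T_bound: "(\<Sum>i\<in>UNIV. \<Sum>j\<in>UNIV. (T i j)\<^sup>2) \<le> 10 * gram"
  proof -
    have "(norm E)\<^sup>2 \<le> 1"
      using Y by (simp add: E_def norm_sum_coord)
    moreover have "(\<Sum>i\<in>UNIV. \<Sum>j\<in>UNIV. (T i j)\<^sup>2) \<le> 10 * gram * (norm E)\<^sup>2"
      unfolding T_def gram_def by (rule sum_squares_potU_deriv3_le)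
    ultimately show ?thesis
      using mult_left_mono[of "(norm E)\<^sup>2" 1 "10 * gram"] gram_nonneg by simp
  qed
  have "(\<Sum>i\<in>UNIV. \<Sum>j\<in>UNIV. \<Sum>k\<in>UNIV. pdiff i (pdiff j (pdiff k (potU \<sigma>0 c N x y))) q * X i j * Y k)
      = (\<Sum>i\<in>UNIV. \<Sum>j\<in>UNIV. X i j * T i j)"
    by (simp only: entry)
  also have "\<dots> \<le> sqrt ((\<Sum>i\<in>UNIV. \<Sum>j\<in>UNIV. (X i j)\<^sup>2) * (\<Sum>i\<in>UNIV. \<Sum>j\<in>UNIV. (T i j)\<^sup>2))"
    by (rule real_le_rsqrt, rule double_sum_Cauchy_Schwarz)
  also have "\<dots> \<le> sqrt (1 * (10 * gram))"
    using X T_bound by (intro real_sqrt_le_mono mult_mono) (simp_all add: sum_nonneg)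
  also have "\<dots> \<le> sqrt (6\<^sup>2 * gram)"
    using gram_nonneg by (intro real_sqrt_le_mono) simp
  also have "\<dots> = 6 * sqrt gram"
    by (simp add: real_sqrt_mult)
  finally show "(\<Sum>i\<in>UNIV. \<Sum>j\<in>UNIV. \<Sum>k\<in>UNIV. pdiff i (pdiff j (pdiff k (potU \<sigma>0 c N x y))) q * X i j * Y k)
      \<le> 6 * sqrt (spec_norm (\<lambda>a b. \<Sum>l=1..N. x l $ a * x l $ b * (\<Sum>k=1..N. (x l \<bullet> x k)\<^sup>2)))"
    by (simp add: gram_def)
qed

theorem lemma15:
  fixes x :: "nat \<Rightarrow> real^'o::finite"
    and y :: "nat \<Rightarrow> 'm::finite"
    and N :: nat and \<sigma>0 c :: real
  assumes "N \<ge> 1" and "\<sigma>0 > 0"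
  shows "(\<forall>q :: real^'o^'m.
           spec_norm (\<lambda>i j. pdiff i (pdiff j (potU \<sigma>0 c N x y)) q)
           \<le> 1 / \<sigma>0\<^sup>2 + spec_norm (\<lambda>a b. \<Sum>l=1..N. x l $ a * x l $ b))
       \<and> (\<forall>q :: real^'o^'m.
           tensor_norm_12_3 (\<lambda>i j k. pdiff i (pdiff j (pdiff k (potU \<sigma>0 c N x y))) q)
           \<le> 6 * sqrt (spec_norm (\<lambda>a b. \<Sum>l=1..N. x l $ a * x l $ b
                                          * (\<Sum>k=1..N. (x l \<bullet> x k)\<^sup>2))))"
  using spec_norm_hessian_potU_le[OF assms(2)] tensor_norm_third_derivative_potU_le by blast

end
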